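(* For $k\in\{0,1,2\}$ let $U_k=\begin{pmatrix}\cos(2k\pi/3)&-\sin(2k\pi/3)\\ \sin(2k\pi/3)&\cos(2k\pi/3)\end{pmatrix}$, let $|+\rangle=(1,0)$, $|-\rangle=(0,1)$. For $\lambda\in(0,1)$ define the POVM $\mathsf E^\lambda$ by $E^\lambda_k=\lambda\,\tfrac23U_k|+\rangle\langle+|U_k^*+(1-\lambda)\tfrac13\mathbb 1$, and for $\eta\in[0,1]$ define $\mathsf B^\eta$ by $B^\eta_k=U_kB^\eta_0U_k^*$ with $B^\eta_0=\eta\,\tfrac23|-\rangle\langle-|+(1-\eta)\tfrac13\mathbb 1$. If $$\eta\le \frac{\lambda^2}{2\left(1-\sqrt{1-\lambda^2}\right)},$$ then $\mathsf E^\lambda$ and $\mathsf B^\eta$ are jointly measurable. In particular, for $\eta=\lambda$ they are jointly measurable whenever $\lambda\le 4/5$.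
   Context: Two POVMs $(E_k)_{k=0}^2$, $(B_j)_{j=0}^2$ on $\mathbb C^2$ are jointly measurable if there is a POVM $(N_{kj})$ with $\sum_jN_{kj}=E_k$ and $\sum_kN_{kj}=B_j$. *)

theory Defs
  imports "HOL-Analysis.Analysis"
begin

type_synonym cmat2 = "complex ^ 2 ^ 2"
type_synonym cvec2 = "complex ^ 2"

definition adj :: "cmat2 \<Rightarrow> cmat2" where
  "adj A = (\<chi> i j. cnj (A $ j $ i))"

definition qform :: "cmat2 \<Rightarrow> cvec2 \<Rightarrow> complex" where
  "qform A v = (\<Sum>i\<in>UNIV. \<Sum>j\<in>UNIV. cnj (v $ i) * A $ i $ j * v $ j)"

definition psd :: "cmat2 \<Rightarrow> bool" where
  "psd A \<longleftrightarrow> adj A = A \<and> (\<forall>v. Im (qform A v) = 0 \<and> 0 \<le> Re (qform A v))"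

definition ketbra :: "cvec2 \<Rightarrow> cmat2" where
  "ketbra v = (\<chi> i j. v $ i * cnj (v $ j))"

definition ket_plus :: cvec2 where "ket_plus = vector [1, 0]"
definition ket_minus :: cvec2 where "ket_minus = vector [0, 1]"

definition rotU :: "nat \<Rightarrow> cmat2" where
  "rotU k = (let t = 2 * real k * pi / 3 in
     vector [vector [complex_of_real (cos t), complex_of_real (- sin t)],
             vector [complex_of_real (sin t), complex_of_real (cos t)]])"

definition povm3 :: "(nat \<Rightarrow> cmat2) \<Rightarrow> bool" where
  "povm3 E \<longleftrightarrow> (\<forall>k<3. psd (E k)) \<and> (\<Sum>k<3. E k) = mat 1"

definition jointly_measurable3 :: "(nat \<Rightarrow> cmat2) \<Rightarrow> (nat \<Rightarrow> cmat2) \<Rightarrow> bool" where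
  "jointly_measurable3 E B \<longleftrightarrow>
     (\<exists>N :: nat \<Rightarrow> nat \<Rightarrow> cmat2.
        (\<forall>k<3. \<forall>j<3. psd (N k j)) \<and> (\<Sum>k<3. \<Sum>j<3. N k j) = mat 1 \<and>
        (\<forall>k<3. (\<Sum>j<3. N k j) = E k) \<and> (\<forall>j<3. (\<Sum>k<3. N k j) = B j))"

definition povmE :: "real \<Rightarrow> nat \<Rightarrow> cmat2" where
  "povmE l k = (l * (2/3)) *\<^sub>R (rotU k ** ketbra ket_plus ** adj (rotU k))
               + ((1 - l) * (1/3)) *\<^sub>R mat 1"

definition povmB0 :: "real \<Rightarrow> cmat2" where
  "povmB0 e = (e * (2/3)) *\<^sub>R ketbra ket_minus + ((1 - e) * (1/3)) *\<^sub>R mat 1"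

definition povmB :: "real \<Rightarrow> nat \<Rightarrow> cmat2" where
  "povmB e k = rotU k ** povmB0 e ** adj (rotU k)"

end

theory Submission
  imports Defs
begin

text \<open>Write Hermitian 2x2 matrices in Bloch form \<open>a\<one> + z\<sigma>\<^sub>z + x\<sigma>\<^sub>x\<close>; such a matrix is positive
  semidefinite iff \<open>z\<^sup>2 + x\<^sup>2 \<le> a\<^sup>2\<close>. Both POVMs live on the trine of unit Bloch vectors \<open>n\<^sub>k\<close>:
  \<open>E\<^sub>k\<close> has Bloch vector \<open>(\<lambda>/3) n\<^sub>k\<close> and \<open>B\<^sub>k\<close> has \<open>-(\<eta>/3) n\<^sub>k\<close>. The joint POVM takes weight
  \<open>|R|/3\<close> with Bloch vector \<open>(R/3) n\<^sub>k\<close> on the diagonal and weight \<open>(1-|R|)/6\<close> with a combination of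
  \<open>n\<^sub>k\<close> and \<open>n\<^sub>j\<close> off it. Positivity then reduces to the single scalar condition
  \<open>(\<lambda>-\<eta>-2R)\<^sup>2 + (\<lambda>+\<eta>)\<^sup>2/3 \<le> (1-|R|)\<^sup>2\<close>, and the optimal choice of \<open>R\<close> (zero when
  \<open>|\<lambda>-\<eta>| \<le> 1/2\<close>) satisfies it whenever \<open>2\<eta> \<le> 1 + \<surd>(1-\<lambda>\<^sup>2)\<close>, the rationalised form of the stated bound.\<close>

definition bloch :: "real \<Rightarrow> real \<Rightarrow> real \<Rightarrow> cmat2" where
  "bloch a z x = vector [vector [complex_of_real (a + z), complex_of_real x],
                         vector [complex_of_real x, complex_of_real (a - z)]]"

lemma bloch_eq_iff: "bloch a z x = bloch a' z' x' \<longleftrightarrow> a = a' \<and> z = z' \<and> x = x'"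
  by (auto simp: bloch_def vec_eq_iff forall_2 simp flip: of_real_add of_real_diff)

lemma bloch_add: "bloch a z x + bloch a' z' x' = bloch (a + a') (z + z') (x + x')"
  by (simp add: bloch_def vec_eq_iff forall_2 algebra_simps)

lemma scaleR_bloch: "c *\<^sub>R bloch a z x = bloch (c * a) (c * z) (c * x)"
  by (simp add: bloch_def vec_eq_iff forall_2 algebra_simps) (simp add: scaleR_conv_of_real algebra_simps)

lemma mat_1_eq_bloch: "mat 1 = bloch 1 0 0"
  by (simp add: bloch_def vec_eq_iff forall_2 mat_def)

lemma ketbra_ket_plus: "ketbra ket_plus = bloch (1/2) (1/2) 0"
  by (simp add: ketbra_def ket_plus_def bloch_def vec_eq_iff forall_2)

lemma ketbra_ket_minus: "ketbra ket_minus = bloch (1/2) (-1/2) 0"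
  by (simp add: ketbra_def ket_minus_def bloch_def vec_eq_iff forall_2)

lemma binary_quadratic_form_nonneg:
  fixes A B C p r :: real
  assumes "0 \<le> A" "0 \<le> C" "B\<^sup>2 \<le> A * C"
  shows "0 \<le> A * p\<^sup>2 + 2 * B * p * r + C * r\<^sup>2"
proof (cases "A = 0")
  case True
  with assms have "B = 0" by simp
  with True assms show ?thesis by simp
next
  case False
  with assms have "0 < A" by simp
  have "A * (A * p\<^sup>2 + 2 * B * p * r + C * r\<^sup>2) = (A * p + B * r)\<^sup>2 + (A * C - B\<^sup>2) * r\<^sup>2"
    by (simp add: power2_eq_square algebra_simps)
  also have "\<dots> \<ge> 0" using assms by simp
  finally show ?thesis using \<open>0 < A\<close> by (simp add: zero_le_mult_iff)
qed

lemma psd_bloch: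
  assumes "0 \<le> a" "z\<^sup>2 + x\<^sup>2 \<le> a\<^sup>2"
  shows "psd (bloch a z x)"
  unfolding psd_def
proof (intro conjI allI)
  have "z\<^sup>2 \<le> a\<^sup>2"
    using assms(2) zero_le_power2[of x] by linarith
  then have "\<bar>z\<bar> \<le> a"
    using assms(1) abs_le_square_iff[of z a] by simp
  then have diag: "0 \<le> a + z" "0 \<le> a - z" by linarith+
  have det: "x\<^sup>2 \<le> (a + z) * (a - z)"
    using assms by (simp add: power2_eq_square algebra_simps)
  show "adj (bloch a z x) = bloch a z x"
    by (simp add: adj_def bloch_def vec_eq_iff forall_2)
  fix v :: cvec2
  show "Im (qform (bloch a z x) v) = 0"
    by (simp add: qform_def sum_2 bloch_def algebra_simps)
  have "Re (qform (bloch a z x) v) =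
      ((a + z) * (Re (v$1))\<^sup>2 + 2 * x * Re (v$1) * Re (v$2) + (a - z) * (Re (v$2))\<^sup>2) +
      ((a + z) * (Im (v$1))\<^sup>2 + 2 * x * Im (v$1) * Im (v$2) + (a - z) * (Im (v$2))\<^sup>2)"
    by (simp add: qform_def sum_2 bloch_def power2_eq_square algebra_simps)
  then show "0 \<le> Re (qform (bloch a z x) v)"
    using binary_quadratic_form_nonneg[OF diag det] by simp
qed

text \<open>\<open>(trine_z k, trine_x k) = (cos (4k\<pi>/3), sin (4k\<pi>/3))\<close> for \<open>k < 3\<close>: conjugation by
  \<open>rotU k\<close> rotates Bloch vectors in the z-x plane by twice the angle \<open>2k\<pi>/3\<close> of \<open>rotU k\<close>.\<close>

definition trine_z :: "nat \<Rightarrow> real" where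
  "trine_z k = (if k = 0 then 1 else -1/2)"

definition trine_x :: "nat \<Rightarrow> real" where
  "trine_x k = (if k = 0 then 0 else if k = 1 then - sqrt 3 / 2 else sqrt 3 / 2)"

lemma less_3_cases: "k < 3 \<Longrightarrow> k = 0 \<or> k = 1 \<or> k = (2::nat)"
  by auto

lemma sum_less_3: "(\<Sum>k<3. f k) = f 0 + f 1 + f (2::nat)"
  by (simp add: numeral_3_eq_3 numeral_2_eq_2)

lemma trine_norm: "k < 3 \<Longrightarrow> (trine_z k)\<^sup>2 + (trine_x k)\<^sup>2 = 1"
  by (auto simp: trine_z_def trine_x_def power2_eq_square dest!: less_3_cases)

lemma trine_inner:
  "k < 3 \<Longrightarrow> j < 3 \<Longrightarrow> k \<noteq> j \<Longrightarrow> trine_z k * trine_z j + trine_x k * trine_x j = -1/2"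
  by (auto simp: trine_z_def trine_x_def dest!: less_3_cases)

lemma sum_trine: "(\<Sum>k<3. trine_z k) = 0" "(\<Sum>k<3. trine_x k) = 0"
  by (simp_all add: sum_less_3 trine_z_def trine_x_def)

lemma cos_sin_rot_angles:
  "cos (2 * real 1 * pi / 3) = -1/2" "sin (2 * real 1 * pi / 3) = sqrt 3 / 2"
  "cos (2 * real 2 * pi / 3) = -1/2" "sin (2 * real 2 * pi / 3) = - sqrt 3 / 2"
proof -
  show "cos (2 * real 1 * pi / 3) = -1/2" "sin (2 * real 1 * pi / 3) = sqrt 3 / 2"
    using cos_120 sin_120 by simp_all
  have "2 * real 2 * pi / 3 = pi / 3 + pi" by simp
  then show "cos (2 * real 2 * pi / 3) = -1/2" "sin (2 * real 2 * pi / 3) = - sqrt 3 / 2"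
    by (simp_all only: cos_periodic_pi sin_periodic_pi cos_60 sin_60)
qed

lemma rotU_conj_bloch:
  assumes "k < 3"
  shows "rotU k ** bloch a z 0 ** adj (rotU k) = bloch a (z * trine_z k) (z * trine_x k)"
proof -
  consider "k = 0" | "k = 1" | "k = 2"
    using less_3_cases[OF assms] by blast
  then show ?thesis
  proof cases
    case k: 1
    show ?thesis unfolding k rotU_def
      by (simp add: adj_def bloch_def trine_z_def trine_x_def vec_eq_iff forall_2
          matrix_matrix_mult_def sum_2)
  next
    case k: 2
    show ?thesis unfolding k rotU_def Let_def cos_sin_rot_angles
      by (simp add: adj_def bloch_def trine_z_def trine_x_def vec_eq_iff forall_2
          matrix_matrix_mult_def sum_2 field_simps flip: of_real_mult) (simp add: mult.commute)
  next
    case k: 3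
    show ?thesis unfolding k rotU_def Let_def cos_sin_rot_angles
      by (simp add: adj_def bloch_def trine_z_def trine_x_def vec_eq_iff forall_2
          matrix_matrix_mult_def sum_2 field_simps flip: of_real_mult) (simp add: mult.commute)
  qed
qed

lemma povmE_eq_bloch: "k < 3 \<Longrightarrow> povmE l k = bloch (1/3) (l/3 * trine_z k) (l/3 * trine_x k)"
  by (simp add: povmE_def ketbra_ket_plus rotU_conj_bloch scaleR_bloch mat_1_eq_bloch bloch_add
      field_simps)

lemma povmB_eq_bloch: "k < 3 \<Longrightarrow> povmB e k = bloch (1/3) (- e/3 * trine_z k) (- e/3 * trine_x k)"
  by (simp add: povmB_def povmB0_def ketbra_ket_minus rotU_conj_bloch scaleR_bloch mat_1_eq_bloch
      bloch_add field_simps)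

text \<open>The coefficients \<open>s\<close> and \<open>t\<close> are forced by the marginals: summing over \<open>j\<close> gives the
  Bloch vector \<open>(R/3 + 2s - t) n\<^sub>k\<close> and summing over \<open>k\<close> gives \<open>(R/3 + 2t - s) n\<^sub>j\<close>, since the
  three trine vectors \<open>n\<^sub>k\<close> add up to zero.\<close>

definition trine_joint :: "real \<Rightarrow> real \<Rightarrow> real \<Rightarrow> nat \<Rightarrow> nat \<Rightarrow> cmat2" where
  "trine_joint l e R k j =
     (let s = (2 * l - e - 3 * R) / 9; t = (l - 2 * e - 3 * R) / 9 in
      if k = j then bloch (\<bar>R\<bar> / 3) (R / 3 * trine_z k) (R / 3 * trine_x k)
      else bloch ((1 - \<bar>R\<bar>) / 6) (s * trine_z k + t * trine_z j) (s * trine_x k + t * trine_x j))"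

lemma norm_trine_combination:
  assumes "k < 3" "j < 3" "k \<noteq> j"
  shows "(s * trine_z k + t * trine_z j)\<^sup>2 + (s * trine_x k + t * trine_x j)\<^sup>2 = s\<^sup>2 + t\<^sup>2 - s * t"
proof -
  have "(s * trine_z k + t * trine_z j)\<^sup>2 + (s * trine_x k + t * trine_x j)\<^sup>2 =
      s\<^sup>2 * ((trine_z k)\<^sup>2 + (trine_x k)\<^sup>2) + t\<^sup>2 * ((trine_z j)\<^sup>2 + (trine_x j)\<^sup>2)
      + 2 * s * t * (trine_z k * trine_z j + trine_x k * trine_x j)"
    by (simp add: power2_eq_square algebra_simps)
  then show ?thesis
    using assms by (simp add: trine_norm trine_inner)
qed

lemma psd_trine_joint:
  assumes "\<bar>R\<bar> \<le> 1" "(l - e - 2 * R)\<^sup>2 + (l + e)\<^sup>2 / 3 \<le> (1 - \<bar>R\<bar>)\<^sup>2" "k < 3" "j < 3"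
  shows "psd (trine_joint l e R k j)"
proof (cases "k = j")
  case True
  have "(R / 3 * trine_z k)\<^sup>2 + (R / 3 * trine_x k)\<^sup>2 = (R / 3)\<^sup>2 * ((trine_z k)\<^sup>2 + (trine_x k)\<^sup>2)"
    by (simp add: power2_eq_square algebra_simps)
  also have "\<dots> = (\<bar>R\<bar> / 3)\<^sup>2"
    using trine_norm[OF \<open>k < 3\<close>] by (simp add: power_divide)
  finally have "(R / 3 * trine_z k)\<^sup>2 + (R / 3 * trine_x k)\<^sup>2 = (\<bar>R\<bar> / 3)\<^sup>2" .
  with True show ?thesis
    by (simp add: trine_joint_def psd_bloch)
next
  case False
  define s where "s = (2 * l - e - 3 * R) / 9"
  define t where "t = (l - 2 * e - 3 * R) / 9"
  have "s\<^sup>2 + t\<^sup>2 - s * t = ((l - e - 2 * R)\<^sup>2 + (l + e)\<^sup>2 / 3) / 36"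
    unfolding s_def t_def by (simp add: power2_eq_square field_simps)
  also have "\<dots> \<le> ((1 - \<bar>R\<bar>) / 6)\<^sup>2"
    using assms(2) by (simp add: power_divide)
  finally have "s\<^sup>2 + t\<^sup>2 - s * t \<le> ((1 - \<bar>R\<bar>) / 6)\<^sup>2" .
  with False assms show ?thesis
    by (simp add: trine_joint_def psd_bloch norm_trine_combination flip: s_def t_def)
qed

lemma trine_joint_row_sum: "k < 3 \<Longrightarrow> (\<Sum>j<3. trine_joint l e R k j) = povmE l k"
  by (auto simp: sum_less_3 trine_joint_def Let_def bloch_add povmE_eq_bloch bloch_eq_iff
      trine_z_def trine_x_def field_simps dest!: less_3_cases)

lemma trine_joint_col_sum: "j < 3 \<Longrightarrow> (\<Sum>k<3. trine_joint l e R k j) = povmB e j"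
  by (auto simp: sum_less_3 trine_joint_def Let_def bloch_add povmB_eq_bloch bloch_eq_iff
      trine_z_def trine_x_def field_simps dest!: less_3_cases)

lemma sum_povmE: "(\<Sum>k<3. povmE l k) = mat 1"
proof -
  have "(\<Sum>k<3. povmE l k) = (\<Sum>k<3. bloch (1/3) (l/3 * trine_z k) (l/3 * trine_x k))"
    by (simp add: povmE_eq_bloch)
  also have "\<dots> = bloch 1 (l/3 * (\<Sum>k<3. trine_z k)) (l/3 * (\<Sum>k<3. trine_x k))"
    by (simp add: sum_less_3 bloch_add algebra_simps)
  also have "\<dots> = mat 1"
    by (simp add: sum_trine mat_1_eq_bloch)
  finally show ?thesis .
qed

lemma jointly_measurable3_trine:
  assumes "\<bar>R\<bar> \<le> 1" "(l - e - 2 * R)\<^sup>2 + (l + e)\<^sup>2 / 3 \<le> (1 - \<bar>R\<bar>)\<^sup>2"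
  shows "jointly_measurable3 (povmE l) (povmB e)"
  unfolding jointly_measurable3_def
proof (intro exI[of _ "trine_joint l e R"] conjI allI impI)
  show "psd (trine_joint l e R k j)" if "k < 3" "j < 3" for k j
    using psd_trine_joint[OF assms that] .
  show "(\<Sum>k<3. \<Sum>j<3. trine_joint l e R k j) = mat 1"
    by (simp add: trine_joint_row_sum sum_povmE)
qed (simp_all add: trine_joint_row_sum trine_joint_col_sum)

lemma trine_middle_bound:
  fixes l e s :: real
  assumes "0 \<le> l" "0 \<le> s" "l\<^sup>2 + s\<^sup>2 = 1" "\<bar>l - e\<bar> \<le> 1/2" "2 * e \<le> 1 + s"
  shows "(2 * e - l)\<^sup>2 \<le> 3 * s\<^sup>2"
proof -
  have "l\<^sup>2 \<le> 1" "s\<^sup>2 \<le> 1"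
    using assms(3) zero_le_power2[of l] zero_le_power2[of s] by linarith+
  then have "l \<le> 1" "s \<le> 1"
    by (simp_all add: abs_square_le_1)
  have s3: "3 * s\<^sup>2 = 3 * (1 - l) * (1 + l)"
    using assms(3) by (simp add: power2_eq_square algebra_simps)
  obtain b where upper: "2 * e - l \<le> b" and b: "b\<^sup>2 \<le> 3 * s\<^sup>2"
  proof (cases "l \<le> 1/2")
    case True
    have "(1 + l) * (1 + l) \<le> (3 * (1 - l)) * (1 + l)"
      using True \<open>0 \<le> l\<close> by (intro mult_right_mono) auto
    then have "(1 + l)\<^sup>2 \<le> 3 * s\<^sup>2"
      unfolding s3 by (simp only: power2_eq_square)
    then show ?thesis
      using that[of "1 + l"] assms(4) by linarith
  next
    case False
    define u where "u = 1 - l"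
    have "u * (u + 2 * s) \<le> u * (4 - 2 * u)"
      using False \<open>l \<le> 1\<close> \<open>s \<le> 1\<close> by (intro mult_left_mono) (auto simp: u_def)
    then have "(1 + s - l)\<^sup>2 \<le> 3 * s\<^sup>2"
      using assms(3) by (simp add: u_def power2_eq_square algebra_simps)
    then show ?thesis
      using that[of "1 + s - l"] assms(5) by linarith
  qed
  have lower: "- (1 - l) \<le> 2 * e - l"
    using assms(4) by linarith
  have "(1 - l) * (1 - l) \<le> (3 * (1 + l)) * (1 - l)"
    using \<open>0 \<le> l\<close> \<open>l \<le> 1\<close> by (intro mult_right_mono) auto
  then have a: "(1 - l)\<^sup>2 \<le> 3 * s\<^sup>2"
    unfolding s3 by (simp only: power2_eq_square ac_simps)
  show ?thesis
  proof (cases "0 \<le> 2 * e - l")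
    case True
    then have "(2 * e - l)\<^sup>2 \<le> b\<^sup>2"
      using upper by (intro power_mono) auto
    with b show ?thesis by linarith
  next
    case False
    then have "(2 * e - l)\<^sup>2 \<le> (1 - l)\<^sup>2"
      using lower \<open>l \<le> 1\<close> abs_le_square_iff[of "2 * e - l" "1 - l"] by auto
    with a show ?thesis by linarith
  qed
qed

lemma trine_condition_solvable:
  fixes l e :: real
  assumes "0 \<le> l" "l \<le> 1" "0 \<le> e" "e \<le> 1" "2 * e \<le> 1 + sqrt (1 - l\<^sup>2)"
  shows "\<exists>R. \<bar>R\<bar> \<le> 1 \<and> (l - e - 2 * R)\<^sup>2 + (l + e)\<^sup>2 / 3 \<le> (1 - \<bar>R\<bar>)\<^sup>2"
proof -
  consider "l + 1/2 \<le> e" | "e + 1/2 \<le> l" | "\<bar>l - e\<bar> \<le> 1/2"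
    by linarith
  then show ?thesis
  proof cases
    case 1
    define R where "R = - (2 * e - 2 * l - 1) / 3"
    have "(1 - \<bar>R\<bar>)\<^sup>2 - ((l - e - 2 * R)\<^sup>2 + (l + e)\<^sup>2 / 3) = (2 - 2 * e) * (2 + 2 * l) / 3"
      using 1 by (simp add: R_def power2_eq_square field_simps)
    also have "\<dots> \<ge> 0"
      using assms by simp
    finally show ?thesis
      using 1 assms by (intro exI[of _ R]) (auto simp: R_def)
  next
    case 2
    define R where "R = (2 * l - 2 * e - 1) / 3"
    have "(1 - \<bar>R\<bar>)\<^sup>2 - ((l - e - 2 * R)\<^sup>2 + (l + e)\<^sup>2 / 3) = (2 - 2 * l) * (2 + 2 * e) / 3"
      using 2 by (simp add: R_def power2_eq_square field_simps)
    also have "\<dots> \<ge> 0"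
      using assms by simp
    finally show ?thesis
      using 2 assms by (intro exI[of _ R]) (auto simp: R_def)
  next
    case 3
    define s where "s = sqrt (1 - l\<^sup>2)"
    have "l\<^sup>2 \<le> 1"
      using assms(1,2) by (simp add: abs_square_le_1)
    then have "0 \<le> s" "l\<^sup>2 + s\<^sup>2 = 1"
      by (simp_all add: s_def)
    have "(l - e)\<^sup>2 + (l + e)\<^sup>2 / 3 = ((2 * e - l)\<^sup>2 + 3 * l\<^sup>2) / 3"
      by (simp add: power2_eq_square field_simps)
    also have "\<dots> \<le> (3 * s\<^sup>2 + 3 * l\<^sup>2) / 3"
      using trine_middle_bound[OF assms(1) \<open>0 \<le> s\<close> \<open>l\<^sup>2 + s\<^sup>2 = 1\<close> 3] assms(5)
      by (simp add: s_def)
    also have "\<dots> = 1"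
      using \<open>l\<^sup>2 + s\<^sup>2 = 1\<close> by simp
    finally show ?thesis
      by (intro exI[of _ 0]) simp
  qed
qed

lemma power2_div_one_minus_sqrt:
  fixes l :: real
  assumes "l \<noteq> 0" "l\<^sup>2 \<le> 1"
  shows "l\<^sup>2 / (2 * (1 - sqrt (1 - l\<^sup>2))) = (1 + sqrt (1 - l\<^sup>2)) / 2"
proof -
  define s where "s = sqrt (1 - l\<^sup>2)"
  have "s < 1"
    using assms by (simp add: s_def)
  have "l\<^sup>2 = (1 - s) * (1 + s)"
    using assms(2) by (simp add: s_def power2_eq_square algebra_simps)
  with \<open>s < 1\<close> have "l\<^sup>2 / (2 * (1 - s)) = (1 + s) / 2"
    by (simp add: field_simps)
  then show ?thesis
    by (simp only: s_def)
qed

theorem mainTheorem5: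
  shows "(\<forall>l e. 0 < l \<and> l < 1 \<and> 0 \<le> e \<and> e \<le> 1 \<and>
            e \<le> l^2 / (2 * (1 - sqrt (1 - l^2)))
            \<longrightarrow> jointly_measurable3 (povmE l) (povmB e))
       \<and> (\<forall>l. 0 < l \<and> l < 1 \<and> l \<le> 4/5
            \<longrightarrow> jointly_measurable3 (povmE l) (povmB l))"
proof (intro conjI allI impI)
  fix l e :: real
  assume "0 < l \<and> l < 1 \<and> 0 \<le> e \<and> e \<le> 1 \<and> e \<le> l^2 / (2 * (1 - sqrt (1 - l^2)))"
  then have l: "0 < l" "l < 1" and e: "0 \<le> e" "e \<le> 1"
    and e_bound: "e \<le> l\<^sup>2 / (2 * (1 - sqrt (1 - l\<^sup>2)))"
    by auto
  have "l\<^sup>2 / (2 * (1 - sqrt (1 - l\<^sup>2))) = (1 + sqrt (1 - l\<^sup>2)) / 2"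
    using l by (intro power2_div_one_minus_sqrt) (auto simp: abs_square_le_1)
  with e_bound have "e \<le> (1 + sqrt (1 - l\<^sup>2)) / 2"
    by (simp only:)
  then have "2 * e \<le> 1 + sqrt (1 - l\<^sup>2)"
    by simp
  with l e obtain R where "\<bar>R\<bar> \<le> 1" "(l - e - 2 * R)\<^sup>2 + (l + e)\<^sup>2 / 3 \<le> (1 - \<bar>R\<bar>)\<^sup>2"
    using trine_condition_solvable[of l e] by auto
  then show "jointly_measurable3 (povmE l) (povmB e)"
    by (rule jointly_measurable3_trine)
next
  fix l :: real
  assume "0 < l \<and> l < 1 \<and> l \<le> 4/5"
  then have "l\<^sup>2 \<le> (4/5)\<^sup>2"
    by (intro power_mono) auto
  then have "(l - l - 2 * 0)\<^sup>2 + (l + l)\<^sup>2 / 3 \<le> (1 - \<bar>0::real\<bar>)\<^sup>2"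
    by (simp add: power2_eq_square algebra_simps)
  then show "jointly_measurable3 (povmE l) (povmB l)"
    by (rule jointly_measurable3_trine[rotated]) simp
qed

end
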